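(* Let $A,B,C$ be logically independent events and let $0\le\alpha_1\le\beta_1\le 1$, $0\le\alpha_2\le\beta_2\le 1$. Consider the family of conditional events $\{C|A,\ B|A,\ C|AB\}$. The set of values $z$ for which there exist $x\in[\alpha_1,\beta_1]$ and $y\in[\alpha_2,\beta_2]$ such that the assessment $P(C|A)=x$, $P(B|A)=y$, $P(C|AB)=z$ is coherent is exactly the interval $[\alpha_3,\beta_3]$, where \[ \alpha_3=\begin{cases}\dfrac{\alpha_1+\alpha_2-1}{\alpha_2}, & \alpha_1+\alpha_2>1,\\[1ex] 0, & \alpha_1+\alpha_2\le 1,\end{cases} \qquad \beta_3=\begin{cases}\dfrac{\beta_1}{\alpha_2}, & \beta_1<\alpha_2,\\[1ex] 1, & \beta_1\ge \alpha_2.\end{cases} \] (Cautious Monotonicity: the bounds $P(C|A)\in[\alpha_1,\beta_1]$, $P(B|A)\in[\alpha_2,\beta_2]$ propagate exactly to $P(C|AB)\in[\alpha_3,\beta_3]$.)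
   Context: Events are elements of a Boolean algebra; $AB$ denotes conjunction, $A\vee B$ disjunction, $A^c$ negation. $A,B,C$ are logically independent if all eight conjunctions $A^{*}B^{*}C^{*}$ (each $X^{*}\in\{X,X^c\}$) are possible (nonempty). A conditional event $E|H$ requires $H\neq\emptyset$; conditional probabilities are treated as primitive (no requirement that $P(H)>0$). Coherence (de Finetti): an assessment $(p_1,\dots,p_n)$ on conditional events $E_1|H_1,\dots,E_n|H_n$ is coherent if for every nonempty $J\subseteq\{1,\dots,n\}$ and every real numbers $s_j$ ($j\in J$), the random gain $G=\sum_{j\in J}s_j\,I_{H_j}(I_{E_j}-p_j)$ (with $I$ denoting indicator functions) satisfies $\max G\ge 0$, where the maximum is taken over the possible worlds (atoms) contained in $\bigvee_{j\in J}H_j$. *)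

theory Defs
  imports Main "HOL-Library.Indicator_Function"
begin

text \<open>Events are modelled as subsets of a type of possible worlds 'w (a concrete
  Boolean algebra of sets: conjunction = intersection, disjunction = union,
  negation = complement). A conditional event E|H together with its assessed
  probability p is a triple (E, H, p).\<close>

definition logically_independent3 :: "'w set \<Rightarrow> 'w set \<Rightarrow> 'w set \<Rightarrow> bool" where
  "logically_independent3 A B C \<longleftrightarrow>
     (\<forall>A' \<in> {A, - A}. \<forall>B' \<in> {B, - B}. \<forall>C' \<in> {C, - C}. A' \<inter> B' \<inter> C' \<noteq> {})"

definition gain :: "('w set \<times> 'w set \<times> real) list \<Rightarrow> nat set \<Rightarrow> (nat \<Rightarrow> real) \<Rightarrow> 'w \<Rightarrow> real" where
  "gain as J s w = (\<Sum>j\<in>J. s j * indicator (fst (snd (as ! j))) w *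
        (indicator (fst (as ! j)) w - snd (snd (as ! j))))"

definition coherent :: "('w set \<times> 'w set \<times> real) list \<Rightarrow> bool" where
  "coherent as \<longleftrightarrow>
     (\<forall>i < length as. fst (snd (as ! i)) \<noteq> {}) \<and>
     (\<forall>J. J \<subseteq> {..<length as} \<longrightarrow> J \<noteq> {} \<longrightarrow>
        (\<forall>s :: nat \<Rightarrow> real. \<exists>w \<in> (\<Union>j\<in>J. fst (snd (as ! j))). gain as J s w \<ge> 0))"

end

theory Submission
  imports Defs
begin

text \<open>The assessment (x, y, z) on C|A, B|A, C|AB is coherent exactly when y, z \<in> [0, 1] and
  zy \<le> x \<le> zy + 1 - y. Outside this region a suitable combination of bets loses on every
  atom of A. Inside it, some probability on the atoms of A (or of AB) assigning each conditional
  event its assessed value gives every bet zero expected gain, so the gain is nonnegative on an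
  atom of positive weight; logical independence makes all these atoms possible. The theorem is
  the projection of this region onto z over the box [\<alpha>1, \<beta>1] \<times> [\<alpha>2, \<beta>2], which is
  attained at y = \<alpha>2.\<close>

lemma exists_pos_weight_nonneg:
  fixes p g :: "'i \<Rightarrow> real"
  assumes "finite S" and "\<And>i. i \<in> S \<Longrightarrow> 0 \<le> p i" and "0 < sum p S"
    and "0 \<le> (\<Sum>i\<in>S. p i * g i)"
  shows "\<exists>i\<in>S. 0 < p i \<and> 0 \<le> g i"
proof (rule ccontr)
  assume none: "\<not> ?thesis"
  obtain i0 where i0: "i0 \<in> S" "0 < p i0"
    using assms(3) sum_nonpos[of S p] by (meson not_le)
  have "p i * g i \<le> 0" if "i \<in> S" for i
    using none assms(2)[OF that] that by (cases "p i = 0") (auto simp: mult_nonneg_nonpos)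
  moreover have "p i0 * g i0 < 0"
    using none i0 by (meson mult_pos_neg not_le)
  ultimately have "(\<Sum>i\<in>S. p i * g i) < (\<Sum>i\<in>S. 0)"
    using i0(1) by (intro sum_strict_mono_ex1[OF assms(1)]) auto
  then show False using assms(4) by simp
qed

lemma gain_CM:
  assumes "J \<subseteq> {..<3}"
  shows "gain [(C, A, x), (B, A, y), (C, A \<inter> B, z)] J s w =
    indicator A w * ((if 0 \<in> J then s 0 else 0) * (indicator C w - x)
      + (if 1 \<in> J then s 1 else 0) * (indicator B w - y)
      + (if 2 \<in> J then s 2 else 0) * indicator B w * (indicator C w - z))"
proof -
  let ?as = "[(C, A, x), (B, A, y), (C, A \<inter> B, z)]"
  let ?g = "\<lambda>j. s j * indicator (fst (snd (?as ! j))) w *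
        (indicator (fst (?as ! j)) w - snd (snd (?as ! j)))"
  have "gain ?as J s w = (\<Sum>j\<in>{0, 1, 2}. if j \<in> J then ?g j else 0)"
    using assms unfolding gain_def
    by (intro sum.mono_neutral_cong_left) (auto simp: lessThan_nat_numeral)
  also have "\<dots> = (if 0 \<in> J then ?g 0 else 0) + (if 1 \<in> J then ?g 1 else 0)
      + (if 2 \<in> J then ?g 2 else 0)"
    by simp
  finally show ?thesis
    by (simp add: indicator_inter_arith algebra_simps)
qed

lemma coherent_CM_necessary:
  assumes "coherent [(C, A, x), (B, A, y), (C, A \<inter> B, z)]"
  shows "0 \<le> y" "y \<le> 1" "0 \<le> z" "z \<le> 1" "z * y \<le> x" "x \<le> z * y + 1 - y"
proof -
  let ?as = "[(C, A, x), (B, A, y), (C, A \<inter> B, z)]"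
  have bet: "\<exists>w \<in> (\<Union>j\<in>J. fst (snd (?as ! j))). 0 \<le> gain ?as J s w"
    if "J \<subseteq> {..<3}" "J \<noteq> {}" for J s
    using assms that unfolding coherent_def by (simp add: numeral_3_eq_3)
  have bet_B: "\<exists>w\<in>A. 0 \<le> t * (indicator B w - y)" for t
    using bet[of "{1}" "\<lambda>_. t"] by (simp add: gain_CM)
  have bet_C_given_B: "\<exists>w\<in>A \<inter> B. 0 \<le> t * (indicator C w - z)" for t
    using bet[of "{2}" "\<lambda>_. t"] by (simp add: gain_CM)
  have bet_all: "\<exists>w\<in>A. 0 \<le> a * (indicator C w - x) + b * (indicator B w - y)
      + c * indicator B w * (indicator C w - z)" for a b c
    using bet[of "{0, 1, 2}" "\<lambda>j. if j = 0 then a else if j = 1 then b else c"]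
    by (simp add: gain_CM)
  show "0 \<le> y" using bet_B[of "-1"] by (auto simp: indicator_def of_bool_def split: if_splits)
  show "y \<le> 1" using bet_B[of 1] by (auto simp: indicator_def of_bool_def split: if_splits)
  show "0 \<le> z" using bet_C_given_B[of "-1"] by (auto simp: indicator_def of_bool_def split: if_splits)
  show "z \<le> 1" using bet_C_given_B[of 1] by (auto simp: indicator_def of_bool_def split: if_splits)
  txt \<open>On A the stakes (-1, z, 1) give the gain x - zy - I(C \<inter> -B), the stakes (1, 1 - z, -1)
    the gain zy + 1 - y - x - I(-B \<inter> -C).\<close>
  obtain w where "w \<in> A"
    and "0 \<le> - (indicator C w - x) + z * (indicator B w - y) + indicator B w * (indicator C w - z)"
    using bet_all[of "-1" z 1] by auto
  then show "z * y \<le> x" by (cases "w \<in> B"; cases "w \<in> C") (simp_all add: algebra_simps)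
  obtain w where "w \<in> A"
    and "0 \<le> (indicator C w - x) + (1 - z) * (indicator B w - y) - indicator B w * (indicator C w - z)"
    using bet_all[of 1 "1 - z" "-1"] by auto
  then show "x \<le> z * y + 1 - y" by (cases "w \<in> B"; cases "w \<in> C") (simp_all add: algebra_simps)
qed

lemma logically_independent3_obtain_atoms:
  assumes "logically_independent3 A B C"
  obtains w where "\<And>b c. w b c \<in> A" "\<And>b c. w b c \<in> B \<longleftrightarrow> b" "\<And>b c. w b c \<in> C \<longleftrightarrow> c"
proof -
  have "\<exists>v. v \<in> A \<and> (v \<in> B \<longleftrightarrow> b) \<and> (v \<in> C \<longleftrightarrow> c)" for b c
    using assms unfolding logically_independent3_def by (cases b; cases c) auto
  then have "\<exists>w. \<forall>b c. w b c \<in> A \<and> (w b c \<in> B \<longleftrightarrow> b) \<and> (w b c \<in> C \<longleftrightarrow> c)"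
    by metis
  then show thesis using that by blast
qed

lemma coherent_CM_sufficient:
  assumes "logically_independent3 A B C"
    and "0 \<le> y" "y \<le> 1" "0 \<le> z" "z \<le> 1" "z * y \<le> x" "x \<le> z * y + 1 - y"
  shows "coherent [(C, A, x), (B, A, y), (C, A \<inter> B, z)]"
proof -
  let ?as = "[(C, A, x), (B, A, y), (C, A \<inter> B, z)]"
  obtain w where wA: "\<And>b c. w b c \<in> A" and wB: "\<And>b c. w b c \<in> B \<longleftrightarrow> b"
    and wC: "\<And>b c. w b c \<in> C \<longleftrightarrow> c"
    using logically_independent3_obtain_atoms[OF assms(1)] by blast
  have "\<exists>v \<in> (\<Union>j\<in>J. fst (snd (?as ! j))). 0 \<le> gain ?as J s v"
    if J: "J \<subseteq> {..<3}" "J \<noteq> {}" for J s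
  proof -
    define t where "t j = (if j \<in> J then s j else 0)" for j
    let ?g = "\<lambda>(b, c). gain ?as J s (w b c)"
    have g: "gain ?as J s (w b c) = t 0 * (of_bool c - x) + t 1 * (of_bool b - y)
        + t 2 * of_bool b * (of_bool c - z)" for b c
      unfolding gain_CM[OF J(1)] by (simp add: t_def wA wB wC indicator_def)
    txt \<open>Every bet has zero expected gain under a distribution on the four atoms inside A:
      the one inducing P(C|A) = x, P(B|A) = y, P(C|AB) = z or, when only C|AB is bet on
      (and P(AB) = y may vanish), its conditional given AB.\<close>
    obtain q where q: "\<And>i. 0 \<le> q i" "0 < sum q UNIV" "(\<Sum>i\<in>UNIV. q i * ?g i) = 0"
      and support: "\<And>b c. 0 < q (b, c) \<Longrightarrow> w b c \<in> (\<Union>j\<in>J. fst (snd (?as ! j)))"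
    proof (cases "0 \<in> J \<or> 1 \<in> J")
      case True
      define p where "p = (\<lambda>(b, c). if b then (if c then z * y else (1 - z) * y)
          else (if c then x - z * y else 1 - y - x + z * y))"
      show thesis
      proof (rule that[of p])
        show "0 \<le> p i" for i
          using assms(2-7) by (auto simp: p_def mult_left_le split: prod.splits)
        show "0 < sum p UNIV" "(\<Sum>i\<in>UNIV. p i * ?g i) = 0"
          by (simp_all add: p_def g UNIV_Times_UNIV[symmetric] UNIV_bool algebra_simps
              del: UNIV_Times_UNIV)
        show "w b c \<in> (\<Union>j\<in>J. fst (snd (?as ! j)))" for b c
          using True wA[of b c] by (auto intro: bexI[where x = 0] bexI[where x = 1])
      qed
    next
      case False
      then have "2 \<in> J" "t 0 = 0" "t 1 = 0"
        using J by (auto simp: t_def lessThan_nat_numeral)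
      define p where "p = (\<lambda>(b, c). if b then (if c then z else 1 - z) else 0)"
      show thesis
      proof (rule that[of p])
        show "0 \<le> p i" for i
          using assms(4,5) by (auto simp: p_def split: prod.splits)
        show "0 < sum p UNIV" "(\<Sum>i\<in>UNIV. p i * ?g i) = 0"
          using \<open>t 0 = 0\<close> \<open>t 1 = 0\<close>
          by (simp_all add: p_def g UNIV_Times_UNIV[symmetric] UNIV_bool algebra_simps
              del: UNIV_Times_UNIV)
        show "w b c \<in> (\<Union>j\<in>J. fst (snd (?as ! j)))" if "0 < p (b, c)" for b c
          using that \<open>2 \<in> J\<close> wA wB
          by (auto simp: p_def intro!: bexI[where x = 2] split: if_splits)
      qed
    qed
    obtain b c where "0 < q (b, c)" "0 \<le> gain ?as J s (w b c)"
      using exists_pos_weight_nonneg[of UNIV q ?g] q by auto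
    then show ?thesis using support by blast
  qed
  moreover have "A \<inter> B \<noteq> {}" using wA wB by blast
  ultimately show ?thesis
    unfolding coherent_def by (auto simp: numeral_3_eq_3 less_Suc_eq)
qed

lemma coherent_CM_iff:
  assumes "logically_independent3 A B C"
  shows "coherent [(C, A, x), (B, A, y), (C, A \<inter> B, z)] \<longleftrightarrow>
    0 \<le> y \<and> y \<le> 1 \<and> 0 \<le> z \<and> z \<le> 1 \<and> z * y \<le> x \<and> x \<le> z * y + 1 - y"
  by (auto dest: coherent_CM_necessary intro: coherent_CM_sufficient[OF assms])

lemma CM_projection_iff:
  fixes \<alpha>1 \<beta>1 \<alpha>2 \<beta>2 z :: real
  assumes "\<alpha>1 \<le> \<beta>1" "0 \<le> \<alpha>2" "\<alpha>2 \<le> \<beta>2" "\<beta>2 \<le> 1"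
  shows "(\<exists>x \<in> {\<alpha>1..\<beta>1}. \<exists>y \<in> {\<alpha>2..\<beta>2}.
            0 \<le> y \<and> y \<le> 1 \<and> 0 \<le> z \<and> z \<le> 1 \<and> z * y \<le> x \<and> x \<le> z * y + 1 - y)
    \<longleftrightarrow> 0 \<le> z \<and> z \<le> 1 \<and> z * \<alpha>2 \<le> \<beta>1 \<and> \<alpha>1 + \<alpha>2 - 1 \<le> z * \<alpha>2"
proof
  assume "\<exists>x \<in> {\<alpha>1..\<beta>1}. \<exists>y \<in> {\<alpha>2..\<beta>2}.
    0 \<le> y \<and> y \<le> 1 \<and> 0 \<le> z \<and> z \<le> 1 \<and> z * y \<le> x \<and> x \<le> z * y + 1 - y"
  then obtain x y where x: "\<alpha>1 \<le> x" "x \<le> \<beta>1" and y: "\<alpha>2 \<le> y"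
    and z: "0 \<le> z" "z \<le> 1" and xy: "z * y \<le> x" "x \<le> z * y + 1 - y"
    by auto
  have "z * \<alpha>2 \<le> z * y" "(1 - z) * \<alpha>2 \<le> (1 - z) * y"
    using y z by (simp_all add: mult_left_mono)
  then show "0 \<le> z \<and> z \<le> 1 \<and> z * \<alpha>2 \<le> \<beta>1 \<and> \<alpha>1 + \<alpha>2 - 1 \<le> z * \<alpha>2"
    using x z xy by (simp add: algebra_simps)
next
  assume z: "0 \<le> z \<and> z \<le> 1 \<and> z * \<alpha>2 \<le> \<beta>1 \<and> \<alpha>1 + \<alpha>2 - 1 \<le> z * \<alpha>2"
  txt \<open>Lowering y widens the interval [zy, zy + 1 - y] for x, so y = \<alpha>2 is the best choice.\<close>
  then show "\<exists>x \<in> {\<alpha>1..\<beta>1}. \<exists>y \<in> {\<alpha>2..\<beta>2}.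
    0 \<le> y \<and> y \<le> 1 \<and> 0 \<le> z \<and> z \<le> 1 \<and> z * y \<le> x \<and> x \<le> z * y + 1 - y"
    using assms by (intro bexI[of _ "max \<alpha>1 (z * \<alpha>2)"] bexI[of _ \<alpha>2]) auto
qed

lemma CM_lower_bound_iff:
  fixes \<alpha>1 \<alpha>2 z :: real
  assumes "\<alpha>1 \<le> 1" "0 \<le> \<alpha>2"
  shows "0 \<le> z \<and> \<alpha>1 + \<alpha>2 - 1 \<le> z * \<alpha>2 \<longleftrightarrow>
    (if \<alpha>1 + \<alpha>2 > 1 then (\<alpha>1 + \<alpha>2 - 1) / \<alpha>2 else 0) \<le> z"
proof (cases "\<alpha>1 + \<alpha>2 > 1")
  case True
  then have "0 < \<alpha>2" using assms by linarith
  then show ?thesis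
    using True by (auto simp: pos_divide_le_eq intro: order_trans[of 0 "(\<alpha>1 + \<alpha>2 - 1) / \<alpha>2"])
next
  case False
  then show ?thesis using assms by (auto intro: order_trans[OF _ mult_nonneg_nonneg])
qed

lemma CM_upper_bound_iff:
  fixes \<beta>1 \<alpha>2 z :: real
  assumes "0 \<le> \<beta>1" "0 \<le> \<alpha>2"
  shows "z \<le> 1 \<and> z * \<alpha>2 \<le> \<beta>1 \<longleftrightarrow> z \<le> (if \<beta>1 < \<alpha>2 then \<beta>1 / \<alpha>2 else 1)"
proof (cases "\<beta>1 < \<alpha>2")
  case True
  then have "0 < \<alpha>2" using assms by linarith
  then show ?thesis
    using True by (auto simp: pos_le_divide_eq intro: order_trans[of z "\<beta>1 / \<alpha>2" 1])
next
  case False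
  then show ?thesis using assms mult_right_mono[of z 1 \<alpha>2] by auto
qed

theorem mainTheorem1:
  fixes A B C :: "'w set" and \<alpha>1 \<beta>1 \<alpha>2 \<beta>2 :: real
  assumes "logically_independent3 A B C"
    and "0 \<le> \<alpha>1" "\<alpha>1 \<le> \<beta>1" "\<beta>1 \<le> 1"
    and "0 \<le> \<alpha>2" "\<alpha>2 \<le> \<beta>2" "\<beta>2 \<le> 1"
  shows "{z. \<exists>x \<in> {\<alpha>1..\<beta>1}. \<exists>y \<in> {\<alpha>2..\<beta>2}.
              coherent [(C, A, x), (B, A, y), (C, A \<inter> B, z)]}
         = {(if \<alpha>1 + \<alpha>2 > 1 then (\<alpha>1 + \<alpha>2 - 1) / \<alpha>2 else 0) ..
            (if \<beta>1 < \<alpha>2 then \<beta>1 / \<alpha>2 else 1)}"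
proof -
  have "(\<exists>x \<in> {\<alpha>1..\<beta>1}. \<exists>y \<in> {\<alpha>2..\<beta>2}. coherent [(C, A, x), (B, A, y), (C, A \<inter> B, z)])
    \<longleftrightarrow> 0 \<le> z \<and> z \<le> 1 \<and> z * \<alpha>2 \<le> \<beta>1 \<and> \<alpha>1 + \<alpha>2 - 1 \<le> z * \<alpha>2" for z
    unfolding coherent_CM_iff[OF assms(1)] using assms(3,5-7) by (rule CM_projection_iff)
  moreover have "(0 \<le> z \<and> z \<le> 1 \<and> z * \<alpha>2 \<le> \<beta>1 \<and> \<alpha>1 + \<alpha>2 - 1 \<le> z * \<alpha>2)
    \<longleftrightarrow> (if \<alpha>1 + \<alpha>2 > 1 then (\<alpha>1 + \<alpha>2 - 1) / \<alpha>2 else 0) \<le> z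
      \<and> z \<le> (if \<beta>1 < \<alpha>2 then \<beta>1 / \<alpha>2 else 1)" for z
    using CM_lower_bound_iff[of \<alpha>1 \<alpha>2 z] CM_upper_bound_iff[of \<beta>1 \<alpha>2 z] assms by auto
  ultimately show ?thesis by auto
qed

end
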